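(* Let $R$ be a commutative ring, $I=(f_1,\dots,f_r)$, $\mathfrak a=(a_1,\dots,a_s)\subseteq I$, $\Phi=(c_{ij})$ an $r\times s$ matrix with $a_j=\sum_ic_{ij}f_i$, and $\Gamma_\bullet$ as in the context. Let $\langle Z_1(\mathbf f;R)\rangle$ denote the $R$-subalgebra of $K_\bullet(\mathbf f;R)$ generated by the Koszul cycles of degree one. Then $$\langle\Gamma_\bullet\cdot\langle Z_1(\mathbf f;R)\rangle\rangle_r=\operatorname{Fitt}_0(I/\mathfrak a).$$ In particular, if the algebra of Koszul cycles $Z_\bullet(\mathbf f;R)$ is generated by cycles of degree one, then $\operatorname{Kitt}(\mathfrak a,I)=\operatorname{Fitt}_0(I/\mathfrak a)$.
   Context: $K_\bullet(\mathbf f;R)$ is the Koszul DG algebra: exterior algebra over $R$ on $e_1,\dots,e_r$ with $\partial e_i=f_i$. $\zeta_j=\sum_ic_{ij}e_i$, $\Gamma_\bullet$ the subalgebra generated by $\zeta_1,\dots,\zeta_s$, $Z_\bullet=Z_\bullet(\mathbf f;R)$ the subalgebra of cycles. For graded subalgebras $A_\bullet,B_\bullet$, $\langle A_\bullet\cdot B_\bullet\rangle_r$ is the degree-$r$ part of the subalgebra they generate, i.e. the span of $x\wedge y$ with $x\in A_j$, $y\in B_{r-j}$, identified with an ideal of $R$ via $K_r=Re_1\wedge\cdots\wedge e_r\cong R$. $\operatorname{Kitt}(\mathfrak a,I):=\langle\Gamma_\bullet\cdot Z_\bullet\rangle_r$. $\operatorname{Fitt}_0$ is the zeroth Fitting ideal.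 *)

theory Defs
  imports "HOL-Combinatorics.Permutations"
begin

text \<open>An element is represented by its coefficient function on subsets S of {..<r}:
x S is the coefficient of e_S (the wedge of the e_i, i in S, in increasing order).\<close>

type_synonym 'a kel = "nat set \<Rightarrow> 'a"

definition kelem :: "nat \<Rightarrow> 'a::comm_ring_1 kel \<Rightarrow> bool" where
  "kelem r x \<longleftrightarrow> (\<forall>S. x S \<noteq> 0 \<longrightarrow> S \<subseteq> {..<r})"

definition homog :: "nat \<Rightarrow> 'a::comm_ring_1 kel \<Rightarrow> bool" where
  "homog k x \<longleftrightarrow> (\<forall>S. x S \<noteq> 0 \<longrightarrow> card S = k)"

definition kone :: "'a::comm_ring_1 kel" where
  "kone = (\<lambda>S. if S = {} then 1 else 0)"

definition kadd :: "'a::comm_ring_1 kel \<Rightarrow> 'a kel \<Rightarrow> 'a kel" where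
  "kadd x y = (\<lambda>S. x S + y S)"

definition ksmult :: "'a::comm_ring_1 \<Rightarrow> 'a kel \<Rightarrow> 'a kel" where
  "ksmult c x = (\<lambda>S. c * x S)"

text \<open>Sign of e_S wedge e_T for disjoint S, T: (-1)^(number of inversions).\<close>
definition wsign :: "nat set \<Rightarrow> nat set \<Rightarrow> 'a::comm_ring_1" where
  "wsign S T = (- 1) ^ card {(s, t). s \<in> S \<and> t \<in> T \<and> t < s}"

definition wedge :: "'a::comm_ring_1 kel \<Rightarrow> 'a kel \<Rightarrow> 'a kel" where
  "wedge x y = (\<lambda>U. \<Sum>S\<in>Pow U. wsign S (U - S) * x S * y (U - S))"

definition ebasis :: "nat \<Rightarrow> 'a::comm_ring_1 kel" where
  "ebasis i = (\<lambda>S. if S = {i} then 1 else 0)"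

text \<open>Koszul differential: d(e_i) = f_i, extended as a graded derivation.\<close>
definition kdiff :: "nat \<Rightarrow> (nat \<Rightarrow> 'a::comm_ring_1) \<Rightarrow> 'a kel \<Rightarrow> 'a kel" where
  "kdiff r f x = (\<lambda>T. \<Sum>i\<in>{..<r} - T. (- 1) ^ card {j\<in>T. j < i} * f i * x (insert i T))"

definition kcycles :: "nat \<Rightarrow> (nat \<Rightarrow> 'a::comm_ring_1) \<Rightarrow> 'a kel set" where
  "kcycles r f = {x. kelem r x \<and> kdiff r f x = (\<lambda>_. 0)}"

definition kcycles1 :: "nat \<Rightarrow> (nat \<Rightarrow> 'a::comm_ring_1) \<Rightarrow> 'a kel set" where
  "kcycles1 r f = {x \<in> kcycles r f. homog 1 x}"

inductive_set subalg :: "'a::comm_ring_1 kel set \<Rightarrow> 'a kel set" for G where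
  one: "kone \<in> subalg G"
| gen: "x \<in> G \<Longrightarrow> x \<in> subalg G"
| add: "x \<in> subalg G \<Longrightarrow> y \<in> subalg G \<Longrightarrow> kadd x y \<in> subalg G"
| smult: "x \<in> subalg G \<Longrightarrow> ksmult c x \<in> subalg G"
| mult: "x \<in> subalg G \<Longrightarrow> y \<in> subalg G \<Longrightarrow> wedge x y \<in> subalg G"

definition zeta :: "nat \<Rightarrow> (nat \<Rightarrow> nat \<Rightarrow> 'a::comm_ring_1) \<Rightarrow> nat \<Rightarrow> 'a kel" where
  "zeta r c j = (\<lambda>S. \<Sum>i<r. c i j * ebasis i S)"

definition Gamma :: "nat \<Rightarrow> (nat \<Rightarrow> nat \<Rightarrow> 'a::comm_ring_1) \<Rightarrow> nat \<Rightarrow> 'a kel set" where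
  "Gamma r c s = subalg (zeta r c ` {..<s})"

definition ideal_gen :: "'a::comm_ring_1 set \<Rightarrow> 'a set" where
  "ideal_gen G = {\<Sum>k<n. a k * g k | (n::nat) a g. \<forall>k<n. g k \<in> G}"

text \<open>< A . B >_r : span of x wedge y with x in A_j, y in B_(r-j), identified with an
ideal of R via K_r = R e_0 ^ ... ^ e_(r-1) (coefficient of e_{0..r-1}).\<close>
definition prod_part :: "nat \<Rightarrow> 'a::comm_ring_1 kel set \<Rightarrow> 'a kel set \<Rightarrow> 'a set" where
  "prod_part r A B = ideal_gen
     {wedge x y {..<r} | x y j. j \<le> r \<and> x \<in> A \<and> homog j x \<and> y \<in> B \<and> homog (r - j) y}"

definition Kitt :: "nat \<Rightarrow> (nat \<Rightarrow> 'a::comm_ring_1) \<Rightarrow> (nat \<Rightarrow> nat \<Rightarrow> 'a) \<Rightarrow> nat \<Rightarrow> 'a set" where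
  "Kitt r f c s = prod_part r (Gamma r c s) (kcycles r f)"

definition detn :: "nat \<Rightarrow> (nat \<Rightarrow> nat \<Rightarrow> 'a::comm_ring_1) \<Rightarrow> 'a" where
  "detn r M = (\<Sum>p | p permutes {..<r}. of_int (sign p) * (\<Prod>i<r. M i (p i)))"

text \<open>Fitt_0(I/J) for I = (f_0..f_(r-1)), computed from the presentation of I/J with
generators the classes of the f_i: the relation module consists of the vectors v with
sum_i v_i f_i in J, and Fitt_0 is generated by the r x r minors of matrices whose
columns are relations.\<close>
definition Fitt0 :: "nat \<Rightarrow> (nat \<Rightarrow> 'a::comm_ring_1) \<Rightarrow> 'a set \<Rightarrow> 'a set" where
  "Fitt0 r f J = ideal_gen
     {detn r (\<lambda>i k. V k i) | V. \<forall>k<r. (\<Sum>i<r. V k i * f i) \<in> J}"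

end

theory Submission
  imports Defs "HOL.Modules"
begin

text \<open>
  Both ideals are generated by top coefficients (coefficients of \<open>e\<^sub>0 \<and> \<dots> \<and> e\<^sub>r\<^sub>-\<^sub>1\<close>) of
  products of degree-one elements, and the top coefficient of \<open>u\<^sub>1 \<and> \<dots> \<and> u\<^sub>r\<close> is the
  determinant of the coefficient vectors of the \<open>u\<^sub>k\<close>. The coefficient vector of \<open>\<zeta>\<^sub>j\<close> is a
  relation of \<open>I/\<aa>\<close> (it maps to \<open>a\<^sub>j\<close>), and so is that of a degree-one cycle (it maps to 0);
  since \<open>\<langle>\<Gamma>\<cdot>\<langle>Z\<^sub>1\<rangle>\<rangle>\<^sub>r\<close> is spanned by top coefficients of products of such elements, it
  lies in \<open>Fitt\<^sub>0(I/\<aa>)\<close>. Conversely, a relation \<open>v\<close> with \<open>\<Sum>\<^sub>i v\<^sub>i f\<^sub>i = \<Sum>\<^sub>j b\<^sub>j a\<^sub>j\<close>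
  splits as \<open>\<Sum>\<^sub>j b\<^sub>j \<zeta>\<^sub>j\<close> plus a degree-one cycle, and expanding \<open>v\<^sub>1 \<and> \<dots> \<and> v\<^sub>r\<close> along
  these splittings writes each generating minor of \<open>Fitt\<^sub>0(I/\<aa>)\<close> as a signed sum of top
  coefficients of products (element of \<open>\<Gamma>\<close>) \<open>\<and>\<close> (product of cycles).
\<close>

section \<open>Exterior algebra on coefficient functions\<close>

definition kzero :: "'a::comm_ring_1 kel" where
  "kzero = (\<lambda>_. 0)"

text \<open>The product vanishes at infinite index sets, so \<open>kone\<close> is a unit only for elements
  whose support consists of finite sets.\<close>

definition kfinite :: "'a::comm_ring_1 kel \<Rightarrow> bool" where
  "kfinite x \<longleftrightarrow> (\<forall>U. x U \<noteq> 0 \<longrightarrow> finite U)"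

lemma kelem_imp_kfinite: "kelem r x \<Longrightarrow> kfinite x"
  unfolding kelem_def kfinite_def by (meson finite_lessThan finite_subset)

lemma wedge_kadd_left: "wedge (kadd x y) z = kadd (wedge x z) (wedge y z)"
  unfolding wedge_def kadd_def by (auto simp: algebra_simps sum.distrib)

lemma wedge_kadd_right: "wedge x (kadd y z) = kadd (wedge x y) (wedge x z)"
  unfolding wedge_def kadd_def by (auto simp: algebra_simps sum.distrib)

lemma wedge_ksmult_left: "wedge (ksmult c x) y = ksmult c (wedge x y)"
  unfolding wedge_def ksmult_def by (auto simp: algebra_simps sum_distrib_left)

lemma wedge_ksmult_right: "wedge x (ksmult c y) = ksmult c (wedge x y)"
  unfolding wedge_def ksmult_def by (auto simp: algebra_simps sum_distrib_left)

lemma wedge_kzero_left: "wedge kzero x = kzero"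
  unfolding wedge_def kzero_def by auto

lemma wedge_kzero_right: "wedge x kzero = kzero"
  unfolding wedge_def kzero_def by auto

lemma ksmult_ksmult: "ksmult a (ksmult b x) = ksmult (a * b) x"
  unfolding ksmult_def by (auto simp: algebra_simps)

lemma ksmult_kzero: "ksmult c kzero = kzero"
  unfolding ksmult_def kzero_def by auto

lemma ksmult_one: "ksmult 1 x = x"
  unfolding ksmult_def by auto

lemma wedge_infinite: "infinite U \<Longrightarrow> wedge x y U = 0"
  unfolding wedge_def by simp

lemma wedge_nonzeroE:
  assumes "wedge x y U \<noteq> 0"
  obtains S where "finite U" "S \<subseteq> U" "x S \<noteq> 0" "y (U - S) \<noteq> 0"
proof -
  have "\<exists>S\<in>Pow U. x S \<noteq> 0 \<and> y (U - S) \<noteq> 0"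
    using assms unfolding wedge_def by (metis (no_types, lifting) mult_not_zero sum.neutral)
  then show thesis using that assms wedge_infinite by blast
qed

lemma kfinite_wedge: "kfinite (wedge x y)"
  unfolding kfinite_def by (metis wedge_nonzeroE)

lemma kfinite_kone: "kfinite kone"
  unfolding kfinite_def kone_def by auto

lemma wsign_empty_left [simp]: "wsign {} T = 1"
  by (simp add: wsign_def)

lemma wsign_empty_right [simp]: "wsign S {} = 1"
  by (simp add: wsign_def)

lemma wedge_kone_left:
  assumes "kfinite x" shows "wedge kone x = x"
proof
  fix U
  show "wedge kone x U = x U"
  proof (cases "finite U")
    case True
    have "wedge kone x U = (\<Sum>S\<in>Pow U. if S = {} then x U else 0)"
      unfolding wedge_def kone_def by (intro sum.cong) auto
    then show ?thesis by (simp add: True)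
  qed (metis assms kfinite_def wedge_infinite)
qed

lemma wedge_kone_right:
  assumes "kfinite x" shows "wedge x kone = x"
proof
  fix U
  show "wedge x kone U = x U"
  proof (cases "finite U")
    case True
    have "wedge x kone U = (\<Sum>S\<in>Pow U. if S = U then x U else 0)"
      unfolding wedge_def kone_def by (intro sum.cong) auto
    then show ?thesis by (simp add: True)
  qed (metis assms kfinite_def wedge_infinite)
qed

lemma wsign_Un_left:
  assumes "finite X" "finite Y" "finite Z" "X \<inter> Y = {}"
  shows "wsign (X \<union> Y) Z = wsign X Z * wsign Y Z"
proof -
  let ?inv = "\<lambda>S. {(s, t). s \<in> S \<and> t \<in> Z \<and> t < s}"
  have "?inv (X \<union> Y) = ?inv X \<union> ?inv Y" by auto
  moreover have "finite (?inv S)" if "finite S" for S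
    by (rule finite_subset[of _ "S \<times> Z"]) (use that assms in auto)
  ultimately have "card (?inv (X \<union> Y)) = card (?inv X) + card (?inv Y)"
    using assms by (simp add: card_Un_disjoint disjoint_iff)
  then show ?thesis unfolding wsign_def by (simp add: power_add)
qed

lemma wsign_Un_right:
  assumes "finite X" "finite Y" "finite Z" "Y \<inter> Z = {}"
  shows "wsign X (Y \<union> Z) = wsign X Y * wsign X Z"
proof -
  let ?inv = "\<lambda>T. {(s, t). s \<in> X \<and> t \<in> T \<and> t < s}"
  have "?inv (Y \<union> Z) = ?inv Y \<union> ?inv Z" by auto
  moreover have "finite (?inv T)" if "finite T" for T
    by (rule finite_subset[of _ "X \<times> T"]) (use that assms in auto)
  ultimately have "card (?inv (Y \<union> Z)) = card (?inv Y) + card (?inv Z)"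
    using assms by (simp add: card_Un_disjoint disjoint_iff)
  then show ?thesis unfolding wsign_def by (simp add: power_add)
qed

lemma wsign_assoc:
  assumes "finite U" "A \<subseteq> U" "B \<subseteq> U - A"
  shows "wsign (A \<union> B) (U - A - B) * wsign A B = wsign A (U - A) * wsign B (U - A - B)"
proof -
  have fin: "finite A" "finite B" "finite (U - A - B)"
    using assms by (auto intro: finite_subset)
  have "U - A = B \<union> (U - A - B)" using assms by auto
  then have right: "wsign A (U - A) = wsign A B * wsign A (U - A - B)"
    using wsign_Un_right[OF fin(1,2,3)] by auto
  have left: "wsign (A \<union> B) (U - A - B) = wsign A (U - A - B) * wsign B (U - A - B)"
    using wsign_Un_left[OF fin] assms by auto
  show ?thesis unfolding left right by (simp add: ac_simps)
qed

lemma wedge_wedge_left_eq_sum: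
  assumes "finite U"
  shows "wedge (wedge x y) z U = (\<Sum>A\<in>Pow U. \<Sum>B\<in>Pow (U - A).
           wsign (A \<union> B) (U - A - B) * wsign A B * x A * y B * z (U - A - B))"
proof -
  define F where "F A S = wsign S (U - S) * wsign A (S - A) * x A * y (S - A) * z (U - S)" for A S
  have "wedge (wedge x y) z U = (\<Sum>S\<in>Pow U. \<Sum>A\<in>{A\<in>Pow U. A \<subseteq> S}. F A S)"
    unfolding wedge_def F_def
  proof (intro sum.cong refl)
    fix S assume "S \<in> Pow U"
    then have "Pow S = {A\<in>Pow U. A \<subseteq> S}" by auto
    then show "wsign S (U - S) * (\<Sum>A\<in>Pow S. wsign A (S - A) * x A * y (S - A)) * z (U - S) =
      (\<Sum>A\<in>{A\<in>Pow U. A \<subseteq> S}. wsign S (U - S) * wsign A (S - A) * x A * y (S - A) * z (U - S))"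
      by (simp add: sum_distrib_left sum_distrib_right algebra_simps)
  qed
  also have "\<dots> = (\<Sum>A\<in>Pow U. \<Sum>S\<in>{S\<in>Pow U. A \<subseteq> S}. F A S)"
    by (rule sum.swap_restrict) (use assms in auto)
  also have "\<dots> = (\<Sum>A\<in>Pow U. \<Sum>B\<in>Pow (U - A). F A (A \<union> B))"
  proof (rule sum.cong[OF refl])
    fix A assume A: "A \<in> Pow U"
    show "(\<Sum>S\<in>{S\<in>Pow U. A \<subseteq> S}. F A S) = (\<Sum>B\<in>Pow (U - A). F A (A \<union> B))"
      by (rule sum.reindex_bij_witness[of _ "\<lambda>B. A \<union> B" "\<lambda>S. S - A"])
        (use A in \<open>auto simp: Un_absorb1\<close>)
  qed
  also have "\<dots> = (\<Sum>A\<in>Pow U. \<Sum>B\<in>Pow (U - A).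
      wsign (A \<union> B) (U - A - B) * wsign A B * x A * y B * z (U - A - B))"
  proof (intro sum.cong refl)
    fix A B assume "A \<in> Pow U" "B \<in> Pow (U - A)"
    then have "A \<union> B - A = B" "U - (A \<union> B) = U - A - B" by auto
    then show "F A (A \<union> B) = wsign (A \<union> B) (U - A - B) * wsign A B * x A * y B * z (U - A - B)"
      unfolding F_def by simp
  qed
  finally show ?thesis .
qed

lemma wedge_assoc: "wedge (wedge x y) z = wedge x (wedge y z)"
proof
  fix U
  show "wedge (wedge x y) z U = wedge x (wedge y z) U"
  proof (cases "finite U")
    case True
    have "wedge (wedge x y) z U = (\<Sum>A\<in>Pow U. \<Sum>B\<in>Pow (U - A).
        wsign A (U - A) * x A * (wsign B (U - A - B) * y B * z (U - A - B)))"
      unfolding wedge_wedge_left_eq_sum[OF True]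
      by (intro sum.cong refl, subst wsign_assoc) (use True in \<open>auto simp: ac_simps\<close>)
    then show ?thesis
      unfolding wedge_def by (simp add: sum_distrib_left)
  qed (simp add: wedge_infinite)
qed

lemma homog_wedge:
  assumes "homog a x" "homog b y" shows "homog (a + b) (wedge x y)"
  unfolding homog_def
proof (intro allI impI)
  fix U assume "wedge x y U \<noteq> 0"
  then obtain S where S: "finite U" "S \<subseteq> U" "x S \<noteq> 0" "y (U - S) \<noteq> 0"
    by (rule wedge_nonzeroE)
  then have "card S = a" "card (U - S) = b" using assms unfolding homog_def by auto
  moreover have "card U = card S + card (U - S)"
    using S by (metis card_Diff_subset card_mono finite_subset le_add_diff_inverse)
  ultimately show "card U = a + b" by simp
qed

lemma homog_kone: "homog 0 kone"
  unfolding homog_def kone_def by auto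

lemma sum_nonzeroE:
  assumes "(\<Sum>j\<in>A. c j * g j) \<noteq> (0::'a::comm_ring_1)"
  obtains j where "j \<in> A" "g j \<noteq> 0"
proof -
  have "\<not> (\<forall>j\<in>A. g j = 0)"
  proof
    assume "\<forall>j\<in>A. g j = 0"
    then have "(\<Sum>j\<in>A. c j * g j) = 0" by simp
    then show False using assms by simp
  qed
  then show thesis using that by blast
qed

lemma homog_ksum:
  assumes "\<And>j. j \<in> A \<Longrightarrow> homog k (g j)"
  shows "homog k (\<lambda>S. \<Sum>j\<in>A. c j * g j S)"
  unfolding homog_def
proof (intro allI impI)
  fix S assume "(\<Sum>j\<in>A. c j * g j S) \<noteq> 0"
  then obtain j where "j \<in> A" "g j S \<noteq> 0" by (rule sum_nonzeroE)
  then show "card S = k" using assms unfolding homog_def by blast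
qed

lemma kelem_ksum:
  assumes "\<And>j. j \<in> A \<Longrightarrow> kelem r (g j)"
  shows "kelem r (\<lambda>S. \<Sum>j\<in>A. c j * g j S)"
  unfolding kelem_def
proof (intro allI impI)
  fix S assume "(\<Sum>j\<in>A. c j * g j S) \<noteq> 0"
  then obtain j where "j \<in> A" "g j S \<noteq> 0" by (rule sum_nonzeroE)
  then show "S \<subseteq> {..<r}" using assms unfolding kelem_def by blast
qed

lemma homog_diff: "homog k x \<Longrightarrow> homog k y \<Longrightarrow> homog k (\<lambda>S. x S - y S)"
  unfolding homog_def by (metis diff_self)

lemma kelem_diff: "kelem r x \<Longrightarrow> kelem r y \<Longrightarrow> kelem r (\<lambda>S. x S - y S)"
  unfolding kelem_def by (metis diff_self)

lemma homog_ebasis: "homog 1 (ebasis i)" "homog (Suc 0) (ebasis i)"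
  unfolding homog_def ebasis_def by auto

lemma kelem_ebasis: "i < r \<Longrightarrow> kelem r (ebasis i)"
  unfolding kelem_def ebasis_def by auto

lemma sum_ebasis_singleton:
  assumes "i < n" shows "(\<Sum>k<n. w k * ebasis k {i}) = w i"
proof -
  have "(\<Sum>k<n. w k * ebasis k {i}) = (\<Sum>k<n. if k = i then w i else 0)"
    unfolding ebasis_def by (intro sum.cong) auto
  then show ?thesis using assms by simp
qed

lemma degree_one_expansion:
  assumes "kelem n u" "homog 1 u"
  shows "u = (\<lambda>S. \<Sum>i<n. u {i} * ebasis i S)"
proof
  fix S
  show "u S = (\<Sum>i<n. u {i} * ebasis i S)"
  proof (cases "\<exists>i<n. S = {i}")
    case True
    then obtain i where "i < n" "S = {i}" by blast
    then show ?thesis using sum_ebasis_singleton[of i n "\<lambda>i. u {i}"] by simp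
  next
    case False
    have "u S = 0"
    proof (rule ccontr)
      assume "u S \<noteq> 0"
      then have "card S = 1" "S \<subseteq> {..<n}" using assms unfolding homog_def kelem_def by auto
      then show False using False by (metis card_1_singletonE insert_subset lessThan_iff)
    qed
    moreover have "(\<Sum>i<n. u {i} * ebasis i S) = 0"
      using False by (intro sum.neutral) (auto simp: ebasis_def)
    ultimately show ?thesis by simp
  qed
qed

lemma wedge_lincomb:
  "wedge (\<lambda>S. \<Sum>i\<in>I. c i * F i S) (\<lambda>S. \<Sum>j\<in>J. d j * G j S) U =
   (\<Sum>i\<in>I. \<Sum>j\<in>J. c i * d j * wedge (F i) (G j) U)"
proof -
  have "wedge (\<lambda>S. \<Sum>i\<in>I. c i * F i S) (\<lambda>S. \<Sum>j\<in>J. d j * G j S) U =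
     (\<Sum>S\<in>Pow U. \<Sum>i\<in>I. \<Sum>j\<in>J. c i * d j * (wsign S (U - S) * F i S * G j (U - S)))"
    unfolding wedge_def by (intro sum.cong refl) (simp add: sum_product sum_distrib_left ac_simps)
  also have "\<dots> = (\<Sum>i\<in>I. \<Sum>j\<in>J. \<Sum>S\<in>Pow U. c i * d j * (wsign S (U - S) * F i S * G j (U - S)))"
    by (subst sum.swap) (simp add: sum.swap[of _ "Pow U"])
  finally show ?thesis
    unfolding wedge_def by (simp add: sum_distrib_left)
qed

lemma wedge_degree_one_pair:
  assumes u: "homog 1 u" and w: "homog 1 w" and "a < b"
  shows "wedge u w {a, b} = u {a} * w {b} - u {b} * w {a}"
proof -
  have zero: "u S = 0" if "S \<in> Pow {a, b} - {{a}, {b}}" for S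
  proof (rule ccontr)
    assume "u S \<noteq> 0"
    then have "card S = 1" using u unfolding homog_def by auto
    then obtain z where "S = {z}" by (rule card_1_singletonE)
    then show False using that by auto
  qed
  have ab: "{(s, t). s \<in> {a} \<and> t \<in> {b} \<and> t < s} = {}"
    using \<open>a < b\<close> by auto
  have sign_ab: "wsign {a} {b} = (1::'a)" unfolding wsign_def ab by simp
  have ba: "{(s, t). s \<in> {b} \<and> t \<in> {a} \<and> t < s} = {(b, a)}"
    using \<open>a < b\<close> by auto
  have sign_ba: "wsign {b} {a} = (- 1::'a)" unfolding wsign_def ba by simp
  have "wedge u w {a, b} = (\<Sum>S\<in>{{a}, {b}}. wsign S ({a, b} - S) * u S * w ({a, b} - S))"
    unfolding wedge_def using zero by (intro sum.mono_neutral_right) auto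
  also have "\<dots> = wsign {a} {b} * u {a} * w {b} + wsign {b} {a} * u {b} * w {a}"
    using \<open>a < b\<close> by (simp add: insert_Diff_if)
  finally show ?thesis using sign_ab sign_ba by simp
qed

lemma card_2_ordered:
  assumes "card (U::nat set) = 2"
  obtains a b where "a < b" "U = {a, b}"
  using assms by (metis card_2_iff insert_commute linorder_neqE_nat)

lemma wedge_degree_one_anticomm:
  assumes u: "homog 1 u" and w: "homog 1 w"
  shows "wedge u w = ksmult (- 1) (wedge w u)"
proof
  fix U
  show "wedge u w U = ksmult (- 1) (wedge w u) U"
  proof (cases "card U = 2")
    case True
    then obtain a b where "a < b" "U = {a, b}" by (rule card_2_ordered)
    then show ?thesis
      using wedge_degree_one_pair[OF u w] wedge_degree_one_pair[OF w u] by (simp add: ksmult_def)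
  next
    case False
    have "homog 2 (wedge u w)" "homog 2 (wedge w u)"
      using homog_wedge[OF u w] homog_wedge[OF w u] by (simp_all add: numeral_2_eq_2)
    then have "wedge u w U = 0" "wedge w u U = 0" using False unfolding homog_def by blast+
    then show ?thesis by (simp add: ksmult_def)
  qed
qed

lemma wedge_degree_one_self:
  assumes u: "homog 1 u"
  shows "wedge u u = kzero"
proof
  fix U
  show "wedge u u U = kzero U"
  proof (cases "card U = 2")
    case True
    then obtain a b where "a < b" "U = {a, b}" by (rule card_2_ordered)
    then show ?thesis using wedge_degree_one_pair[OF u u] by (simp add: kzero_def mult.commute)
  next
    case False
    have "homog 2 (wedge u u)" using homog_wedge[OF u u] by (simp add: numeral_2_eq_2)
    then show ?thesis using False unfolding homog_def kzero_def by auto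
  qed
qed

definition wedge_list :: "'a::comm_ring_1 kel list \<Rightarrow> 'a kel" where
  "wedge_list xs = foldr wedge xs kone"

lemma wedge_list_Nil [simp]: "wedge_list [] = kone"
  by (simp add: wedge_list_def)

lemma wedge_list_Cons [simp]: "wedge_list (x # xs) = wedge x (wedge_list xs)"
  by (simp add: wedge_list_def)

lemma kfinite_wedge_list: "kfinite (wedge_list xs)"
  by (cases xs) (simp_all add: kfinite_kone kfinite_wedge)

lemma wedge_list_append: "wedge_list (xs @ ys) = wedge (wedge_list xs) (wedge_list ys)"
  by (induction xs) (simp_all add: wedge_kone_left kfinite_wedge_list wedge_assoc)

lemma homog_wedge_list: "(\<And>x. x \<in> set xs \<Longrightarrow> homog 1 x) \<Longrightarrow> homog (length xs) (wedge_list xs)"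
  by (induction xs) (simp_all add: homog_kone homog_wedge[of 1, simplified])

lemma wedge_list_in_subalg: "set xs \<subseteq> subalg G \<Longrightarrow> wedge_list xs \<in> subalg G"
  by (induction xs) (simp_all add: subalg.one subalg.mult)

lemma wedge_list_commute_degree_one:
  assumes u: "homog 1 u" and xs: "\<And>x. x \<in> set xs \<Longrightarrow> homog 1 x"
  shows "wedge (wedge_list xs) u = ksmult ((- 1) ^ length xs) (wedge u (wedge_list xs))"
  using xs
proof (induction xs)
  case Nil
  have "kfinite u" using u unfolding homog_def kfinite_def by (metis card.infinite zero_neq_one)
  then show ?case by (simp add: wedge_kone_left wedge_kone_right ksmult_one)
next
  case (Cons x xs)
  have x: "homog 1 x" using Cons.prems by simp
  have "wedge (wedge_list (x # xs)) u = ksmult ((- 1) ^ length xs) (wedge (wedge x u) (wedge_list xs))"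
    using Cons by (simp add: wedge_ksmult_right wedge_assoc)
  also have "\<dots> = ksmult ((- 1) ^ length (x # xs)) (wedge u (wedge_list (x # xs)))"
    by (simp add: wedge_degree_one_anticomm[OF x u] wedge_ksmult_left ksmult_ksmult wedge_assoc)
  finally show ?case .
qed

lemma wedge_list_move_to_front:
  assumes "homog 1 y" "\<And>x. x \<in> set ys \<Longrightarrow> homog 1 x"
  shows "wedge_list (ys @ y # zs) = ksmult ((- 1) ^ length ys) (wedge_list (y # ys @ zs))"
proof -
  have "wedge_list (ys @ y # zs) = wedge (wedge (wedge_list ys) y) (wedge_list zs)"
    by (simp add: wedge_list_append wedge_assoc)
  also have "\<dots> = ksmult ((- 1) ^ length ys) (wedge (wedge y (wedge_list ys)) (wedge_list zs))"
    by (simp add: wedge_list_commute_degree_one[OF assms] wedge_ksmult_left)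
  finally show ?thesis by (simp add: wedge_list_append wedge_assoc)
qed

lemma wedge_list_swap:
  assumes "homog 1 x" "homog 1 y" "\<And>z. z \<in> set ys \<Longrightarrow> homog 1 z"
  shows "wedge_list (xs @ x # ys @ y # zs) = ksmult (- 1) (wedge_list (xs @ y # ys @ x # zs))"
proof -
  have "wedge_list (x # ys @ y # zs) = ksmult ((- 1) ^ length ys) (wedge x (wedge y (wedge_list (ys @ zs))))"
    using wedge_list_move_to_front[of y ys zs] assms by (simp add: wedge_ksmult_right)
  also have "\<dots> = ksmult (- 1) (ksmult ((- 1) ^ length ys) (wedge y (wedge x (wedge_list (ys @ zs)))))"
    by (simp add: wedge_assoc[symmetric] wedge_degree_one_anticomm[OF assms(1,2)]
        wedge_ksmult_left ksmult_ksmult mult.commute)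
  also have "\<dots> = ksmult (- 1) (wedge_list (y # ys @ x # zs))"
    using wedge_list_move_to_front[of x ys zs] assms by (simp add: wedge_ksmult_right)
  finally show ?thesis by (simp add: wedge_list_append wedge_ksmult_right)
qed

lemma wedge_list_repeated:
  assumes "homog 1 x" "\<And>z. z \<in> set ys \<Longrightarrow> homog 1 z"
  shows "wedge_list (xs @ x # ys @ x # zs) = kzero"
proof -
  have "wedge_list (x # ys @ x # zs) = kzero"
    using wedge_list_move_to_front[of x ys zs] assms
    by (simp add: wedge_ksmult_right wedge_assoc[symmetric] wedge_degree_one_self
        wedge_kzero_left ksmult_kzero)
  then show ?thesis by (simp add: wedge_list_append wedge_kzero_right)
qed

section \<open>The top coefficient of a product of degree-one elements\<close>

definition ebasis_wedge :: "nat list \<Rightarrow> 'a::comm_ring_1 kel" where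
  "ebasis_wedge gs = wedge_list (map ebasis gs)"

lemma ebasis_wedge_not_distinct: "\<not> distinct gs \<Longrightarrow> ebasis_wedge gs = kzero"
  unfolding ebasis_wedge_def
  by (auto simp: homog_ebasis dest!: not_distinct_decomp intro!: wedge_list_repeated)

lemma ebasis_wedge_swap:
  "ebasis_wedge (xs @ a # ys @ b # zs) = ksmult (- 1) (ebasis_wedge (xs @ b # ys @ a # zs))"
  unfolding ebasis_wedge_def by (auto simp: homog_ebasis intro!: wedge_list_swap)

lemma ebasis_wedge_transpose:
  assumes "distinct gs" "a \<in> set gs" "b \<in> set gs" "a \<noteq> b"
  shows "ebasis_wedge (map (transpose a b) gs) = ksmult (- 1) (ebasis_wedge gs)"
proof -
  have fix_other: "map (transpose a b) xs = xs" if "a \<notin> set xs" "b \<notin> set xs" for xs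
    using that by (intro map_idI) (metis transpose_apply_other)
  have "\<exists>xs ys zs. gs = xs @ a # ys @ b # zs \<or> gs = xs @ b # ys @ a # zs"
  proof -
    obtain xs zs where gs: "gs = xs @ a # zs" using assms(2) split_list by metis
    then have "b \<in> set xs \<or> b \<in> set zs" using assms(3,4) by auto
    then show ?thesis
    proof
      assume "b \<in> set xs"
      then obtain xs1 xs2 where "xs = xs1 @ b # xs2" by (meson split_list)
      then show ?thesis using gs by auto
    next
      assume "b \<in> set zs"
      then obtain zs1 zs2 where "zs = zs1 @ b # zs2" by (meson split_list)
      then show ?thesis using gs by auto
    qed
  qed
  then obtain xs ys zs where "gs = xs @ a # ys @ b # zs \<or> gs = xs @ b # ys @ a # zs" by blast
  then show ?thesis
  proof
    assume gs: "gs = xs @ a # ys @ b # zs"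
    then have "map (transpose a b) gs = xs @ b # ys @ a # zs"
      using assms(1) fix_other by simp
    then show ?thesis using gs ebasis_wedge_swap by metis
  next
    assume gs: "gs = xs @ b # ys @ a # zs"
    then have "map (transpose a b) gs = xs @ a # ys @ b # zs"
      using assms(1) fix_other by simp
    then show ?thesis using gs ebasis_wedge_swap[of xs a ys b zs] by (simp add: ksmult_ksmult ksmult_one)
  qed
qed

lemma wedge_ebasis_left:
  assumes "finite U"
  shows "wedge (ebasis i) y U = (if i \<in> U then wsign {i} (U - {i}) * y (U - {i}) else 0)"
proof -
  have "wedge (ebasis i) y U = (\<Sum>S\<in>Pow U. if S = {i} then wsign {i} (U - {i}) * y (U - {i}) else 0)"
    unfolding wedge_def ebasis_def by (intro sum.cong) auto
  then show ?thesis using assms by (simp add: sum.delta')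
qed

lemma ebasis_wedge_upt: "ebasis_wedge [k..<n] = (\<lambda>S. if S = {k..<n} then 1 else 0)"
proof (induction "n - k" arbitrary: k)
  case 0
  then show ?case by (simp add: ebasis_wedge_def kone_def)
next
  case (Suc d)
  then have "k < n" by simp
  have IH: "ebasis_wedge [Suc k..<n] = (\<lambda>S. if S = {Suc k..<n} then 1 else (0::'a))"
    using Suc(1)[of "Suc k"] Suc(2) by simp
  have no_inversions: "{(s, t). s \<in> {k} \<and> t \<in> {Suc k..<n} \<and> t < s} = {}" by auto
  have sign: "wsign {k} {Suc k..<n} = (1::'a)"
    unfolding wsign_def no_inversions by simp
  show ?case
  proof
    fix U
    have split: "U = {k..<n} \<longleftrightarrow> k \<in> U \<and> U - {k} = {Suc k..<n}"
    proof
      show "k \<in> U \<and> U - {k} = {Suc k..<n}" if "U = {k..<n}"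
        using that \<open>k < n\<close> by auto
      assume "k \<in> U \<and> U - {k} = {Suc k..<n}"
      then have "U = insert k {Suc k..<n}" by (metis insert_Diff)
      also have "\<dots> = {k..<n}" using \<open>k < n\<close> by auto
      finally show "U = {k..<n}" .
    qed
    show "ebasis_wedge [k..<n] U = (if U = {k..<n} then 1 else (0::'a))"
    proof (cases "finite U")
      case True
      have "ebasis_wedge [k..<n] U = (wedge (ebasis k) (ebasis_wedge [Suc k..<n]) U :: 'a)"
        using \<open>k < n\<close> by (simp add: upt_conv_Cons ebasis_wedge_def)
      also have "\<dots> = (if k \<in> U \<and> U - {k} = {Suc k..<n} then 1 else 0)"
        unfolding wedge_ebasis_left[OF True] by (simp add: IH sign)
      finally show ?thesis by (simp only: split)
    next
      case False
      then have "U \<noteq> {k..<n}" by auto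
      then show ?thesis using False \<open>k < n\<close>
        by (simp add: upt_conv_Cons ebasis_wedge_def wedge_infinite)
    qed
  qed
qed

lemma ebasis_wedge_permutation:
  assumes "p permutes {..<n}"
  shows "ebasis_wedge (map p [0..<n]) {..<n} = of_int (sign p)"
  using assms finite_lessThan
proof (induction p rule: permutes_induct)
  case id
  then show ?case by (simp add: ebasis_wedge_upt atLeast0LessThan)
next
  case (swap a b p)
  have "distinct (map p [0..<n])"
    using swap.hyps(4) by (simp add: distinct_map permutes_inj_on)
  moreover have "a \<in> set (map p [0..<n])" "b \<in> set (map p [0..<n])"
    using swap.hyps(1,2,4) by (auto simp: permutes_image atLeast0LessThan)
  ultimately have "ebasis_wedge (map (transpose a b) (map p [0..<n])) = ksmult (- 1) (ebasis_wedge (map p [0..<n]))"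
    using swap.hyps(3) by (rule ebasis_wedge_transpose)
  from fun_cong[OF this, of "{..<n}"]
  have "ebasis_wedge (map (transpose a b \<circ> p) [0..<n]) {..<n} = - (ebasis_wedge (map p [0..<n]) {..<n} :: 'a)"
    by (simp add: ksmult_def)
  moreover have "sign (transpose a b \<circ> p) = - sign p"
    using sign_compose[OF permutation_swap_id permutes_imp_permutation[OF _ swap.hyps(4)]] swap.hyps(3)
    by (simp add: sign_swap_id)
  ultimately show ?case using swap.IH by (simp add: o_def)
qed

lemma wedge_list_expansion:
  assumes "\<And>u. u \<in> set us \<Longrightarrow> kelem n u \<and> homog 1 u"
  shows "wedge_list us U = (\<Sum>gs\<in>{gs. set gs \<subseteq> {..<n} \<and> length gs = length us}.
           (\<Prod>k<length us. (us ! k) {gs ! k}) * ebasis_wedge gs U)"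
  using assms
proof (induction us arbitrary: U)
  case Nil
  have "{gs. set gs \<subseteq> {..<n} \<and> length gs = 0} = {[]}" by auto
  then show ?case by (simp add: ebasis_wedge_def)
next
  case (Cons u us)
  let ?L = "\<lambda>m. {gs. set gs \<subseteq> {..<n} \<and> length gs = m}"
  let ?w = "\<lambda>us gs. \<Prod>k<length us. (us ! k) {gs ! k}"
  have u: "u = (\<lambda>S. \<Sum>i<n. u {i} * ebasis i S)"
    using Cons.prems[of u] by (intro degree_one_expansion) auto
  have "wedge_list (u # us) U =
      wedge (\<lambda>S. \<Sum>i<n. u {i} * ebasis i S) (\<lambda>S. \<Sum>gs\<in>?L (length us). ?w us gs * ebasis_wedge gs S) U"
  proof -
    have "wedge_list us = (\<lambda>S. \<Sum>gs\<in>?L (length us). ?w us gs * ebasis_wedge gs S)"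
      using Cons by auto
    then show ?thesis using arg_cong2[OF u, of _ _ "\<lambda>x y. wedge x y U"] by simp
  qed
  also have "\<dots> = (\<Sum>i<n. \<Sum>gs\<in>?L (length us). u {i} * ?w us gs * wedge (ebasis i) (ebasis_wedge gs) U)"
    by (rule wedge_lincomb)
  also have "\<dots> = (\<Sum>(gs, i)\<in>?L (length us) \<times> {..<n}. ?w (u # us) (i # gs) * ebasis_wedge (i # gs) U)"
    by (subst sum.swap) (simp add: sum.cartesian_product ebasis_wedge_def prod.lessThan_Suc_shift ac_simps
        del: prod.lessThan_Suc)
  also have "\<dots> = (\<Sum>gs\<in>?L (length (u # us)). ?w (u # us) gs * ebasis_wedge gs U)"
    unfolding lists_length_Suc_eq length_Cons
    by (subst sum.reindex) (auto simp: inj_split_Cons case_prod_beta)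
  finally show ?case .
qed

lemma detn_transpose: "detn n (\<lambda>i k. M k i) = detn n M"
proof -
  have "detn n (\<lambda>i k. M k i) = (\<Sum>p | p permutes {..<n}. of_int (sign (inv p)) * (\<Prod>i<n. M (inv p i) i))"
    unfolding detn_def by (rule sum_permutations_inverse)
  also have "\<dots> = detn n M"
    unfolding detn_def
  proof (rule sum.cong[OF refl])
    fix p assume "p \<in> {p. p permutes {..<n}}"
    then have p: "p permutes {..<n}" by simp
    have "(\<Prod>i<n. M (inv p i) i) = (\<Prod>k<n. M (inv p (p k)) (p k))"
      using prod.reindex_bij_betw[OF permutes_imp_bij[OF p], of "\<lambda>i. M (inv p i) i"] by simp
    then show "of_int (sign (inv p)) * (\<Prod>i<n. M (inv p i) i) = of_int (sign p) * (\<Prod>k<n. M k (p k))"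
      by (simp add: permutes_inverses(2)[OF p] sign_inverse permutes_imp_permutation[OF _ p])
  qed
  finally show ?thesis .
qed

lemma detn_cong:
  assumes "\<And>i k. i < n \<Longrightarrow> k < n \<Longrightarrow> M i k = M' i k"
  shows "detn n M = detn n M'"
  unfolding detn_def
proof (intro sum.cong refl arg_cong2[where f = "(*)"] prod.cong)
  fix p i assume "p \<in> {p. p permutes {..<n}}" "i \<in> {..<n}"
  then show "M i (p i) = M' i (p i)"
    using assms permutes_in_image[of p "{..<n}" i] by auto
qed

lemma distinct_list_permutes:
  assumes "set gs \<subseteq> {..<n}" "length gs = n" "distinct gs"
  shows "(\<lambda>k. if k < n then gs ! k else k) permutes {..<n}"
proof (rule bij_imp_permutes)
  let ?p = "\<lambda>k. if k < n then gs ! k else k"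
  have "?p ` {..<n} = set gs"
    using assms(2) by (auto simp: in_set_conv_nth)
  also have "set gs = {..<n}"
    using assms by (simp add: card_subset_eq distinct_card)
  finally show "bij_betw ?p {..<n} {..<n}"
    using assms(2,3) by (simp add: bij_betw_def inj_on_def nth_eq_iff_index_eq)
qed simp

lemma bij_betw_permutes_distinct_lists:
  "bij_betw (\<lambda>p. map p [0..<n]) {p. p permutes {..<n}}
     {gs. set gs \<subseteq> {..<n} \<and> length gs = n \<and> distinct gs}"
proof (rule bij_betw_byWitness[where f' = "\<lambda>gs k. if k < n then gs ! k else k"])
  show "\<forall>p\<in>{p. p permutes {..<n}}. (\<lambda>k. if k < n then map p [0..<n] ! k else k) = p"
    by (auto simp: fun_eq_iff permutes_not_in)
  show "\<forall>gs\<in>{gs. set gs \<subseteq> {..<n} \<and> length gs = n \<and> distinct gs}.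
      map (\<lambda>k. if k < n then gs ! k else k) [0..<n] = gs"
    by (auto intro: nth_equalityI)
  show "(\<lambda>p. map p [0..<n]) ` {p. p permutes {..<n}} \<subseteq> {gs. set gs \<subseteq> {..<n} \<and> length gs = n \<and> distinct gs}"
    using permutes_in_image[of _ "{..<n}"] by (auto simp: distinct_map permutes_inj_on)
  show "(\<lambda>gs k. if k < n then gs ! k else k) ` {gs. set gs \<subseteq> {..<n} \<and> length gs = n \<and> distinct gs}
      \<subseteq> {p. p permutes {..<n}}"
    using distinct_list_permutes by blast
qed

lemma wedge_list_top_coeff:
  assumes "length us = n" and "\<And>u. u \<in> set us \<Longrightarrow> kelem n u \<and> homog 1 u"
  shows "wedge_list us {..<n} = detn n (\<lambda>i k. (us ! k) {i})"
proof -
  let ?w = "\<lambda>gs. \<Prod>k<n. (us ! k) {gs ! k}"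
  let ?D = "{gs. set gs \<subseteq> {..<n} \<and> length gs = n \<and> distinct gs}"
  have "wedge_list us {..<n} = (\<Sum>gs\<in>{gs. set gs \<subseteq> {..<n} \<and> length gs = n}. ?w gs * ebasis_wedge gs {..<n})"
    using wedge_list_expansion[OF assms(2)] assms(1) by simp
  also have "\<dots> = (\<Sum>gs\<in>?D. ?w gs * ebasis_wedge gs {..<n})"
  proof (rule sum.mono_neutral_right)
    show "finite {gs. set gs \<subseteq> {..<n} \<and> length gs = n}"
      by (simp add: finite_lists_length_eq)
    show "\<forall>gs\<in>{gs. set gs \<subseteq> {..<n} \<and> length gs = n} - ?D. ?w gs * ebasis_wedge gs {..<n} = 0"
      by (simp add: ebasis_wedge_not_distinct kzero_def)
  qed blast
  also have "\<dots> = (\<Sum>p | p permutes {..<n}. ?w (map p [0..<n]) * ebasis_wedge (map p [0..<n]) {..<n})"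
    by (rule sum.reindex_bij_betw[OF bij_betw_permutes_distinct_lists, symmetric])
  also have "\<dots> = detn n (\<lambda>k i. (us ! k) {i})"
    unfolding detn_def
  proof (rule sum.cong[OF refl])
    fix p assume "p \<in> {p. p permutes {..<n}}"
    then have p: "p permutes {..<n}" by simp
    have "?w (map p [0..<n]) = (\<Prod>k<n. (us ! k) {p k})"
      by (intro prod.cong) auto
    then show "?w (map p [0..<n]) * ebasis_wedge (map p [0..<n]) {..<n} = of_int (sign p) * (\<Prod>k<n. (us ! k) {p k})"
      by (simp add: ebasis_wedge_permutation[OF p] mult.commute)
  qed
  also have "\<dots> = detn n (\<lambda>i k. (us ! k) {i})"
    by (rule detn_transpose[symmetric])
  finally show ?thesis .
qed

lemma wedge_list_rows_top_coeff:
  "wedge_list (map (\<lambda>k S. \<Sum>i<r. V k i * ebasis i S) [0..<r]) {..<r} = detn r (\<lambda>i k. V k i)"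
proof -
  let ?us = "map (\<lambda>k S. \<Sum>i<r. V k i * ebasis i S) [0..<r]"
  have "wedge_list ?us {..<r} = detn r (\<lambda>i k. (?us ! k) {i})"
    by (intro wedge_list_top_coeff) (auto intro!: homog_ksum homog_ebasis kelem_ksum kelem_ebasis)
  also have "\<dots> = detn r (\<lambda>i k. V k i)"
    by (intro detn_cong) (simp add: sum_ebasis_singleton)
  finally show ?thesis .
qed

text \<open>The ring as a module over itself: \<open>ideal.subspace\<close> means being an ideal and
  \<open>ideal.span\<close> is the ideal generated by a set.\<close>

interpretation ideal: module "(*) :: 'a::comm_ring_1 \<Rightarrow> 'a \<Rightarrow> 'a"
  by standard (simp_all add: algebra_simps)

declare ideal.scale_scale [simp del] \<comment> \<open>it would loop against \<open>mult.assoc\<close>\<close>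

lemma ideal_gen_eq_span: "ideal_gen G = ideal.span G"
proof
  show "ideal_gen G \<subseteq> ideal.span G"
    unfolding ideal_gen_def by (auto intro!: ideal.span_sum ideal.span_scale intro: ideal.span_base)
  show "ideal.span G \<subseteq> ideal_gen G"
  proof
    fix x assume "x \<in> ideal.span G"
    then show "x \<in> ideal_gen G"
    proof (induction rule: ideal.span_induct_alt)
      case base
      show ?case unfolding ideal_gen_def by (intro CollectI exI[of _ 0]) simp
    next
      case (step c g y)
      then obtain n :: nat and b h where y: "y = (\<Sum>k<n. b k * h k)" "\<forall>k<n. h k \<in> G"
        unfolding ideal_gen_def by blast
      have "(\<Sum>k<n. (b(n := c)) k * (h(n := g)) k) = y"
        unfolding y(1) by (intro sum.cong) auto
      then have "c * g + y = (\<Sum>k<Suc n. (b(n := c)) k * (h(n := g)) k)"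
        by (simp add: add.commute)
      moreover have "\<forall>k<Suc n. (h(n := g)) k \<in> G"
        using y(2) step(1) by (simp add: less_Suc_eq)
      ultimately show ?case
        unfolding ideal_gen_def by blast
    qed
  qed
qed

lemma ideal_gen_minimal: "G \<subseteq> I \<Longrightarrow> ideal.subspace I \<Longrightarrow> ideal_gen G \<subseteq> I"
  unfolding ideal_gen_eq_span by (rule ideal.span_minimal)

lemma ideal_gen_finite_lincomb:
  assumes "x \<in> ideal_gen (a ` {..<(s::nat)})"
  obtains b where "x = (\<Sum>j<s. b j * a j)"
proof -
  from assms have "x \<in> ideal.span (a ` {..<s})" by (simp add: ideal_gen_eq_span)
  then have "\<exists>b. x = (\<Sum>j<s. b j * a j)"
  proof (induction rule: ideal.span_induct_alt)
    case base
    show ?case by (intro exI[of _ "\<lambda>_. 0"]) simp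
  next
    case (step c g y)
    then obtain j0 b where j0: "j0 < s" "g = a j0" and y: "y = (\<Sum>j<s. b j * a j)" by blast
    have "(\<Sum>j<s. (if j = j0 then c else 0) * a j) = (\<Sum>j<s. if j = j0 then c * g else 0)"
      using j0 by (intro sum.cong) auto
    then have "c * g + y = (\<Sum>j<s. (b j + (if j = j0 then c else 0)) * a j)"
      using j0 y by (simp add: distrib_right sum.distrib)
    then show ?case by (intro exI[of _ "\<lambda>j. b j + (if j = j0 then c else 0)"])
  qed
  then show thesis using that by blast
qed

inductive_set kspan :: "'a::comm_ring_1 kel set \<Rightarrow> 'a kel set" for M where
  zero: "kzero \<in> kspan M"
| base: "x \<in> M \<Longrightarrow> x \<in> kspan M"
| add: "x \<in> kspan M \<Longrightarrow> y \<in> kspan M \<Longrightarrow> kadd x y \<in> kspan M"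
| smult: "x \<in> kspan M \<Longrightarrow> ksmult c x \<in> kspan M"

lemma kspan_coeff_in_ideal:
  assumes "x \<in> kspan M" "\<And>m. m \<in> M \<Longrightarrow> m T \<in> I" "ideal.subspace I"
  shows "x T \<in> I"
  using assms(1)
  by (induction x rule: kspan.induct)
     (use assms(2,3) in \<open>auto simp: kzero_def kadd_def ksmult_def
        ideal.subspace_0 ideal.subspace_add ideal.subspace_scale\<close>)

lemma kspan_subset:
  assumes "M \<subseteq> kspan N" "x \<in> kspan M"
  shows "x \<in> kspan N"
  using assms(2) by (induction x rule: kspan.induct) (use assms(1) in \<open>auto intro: kspan.intros\<close>)

lemma kspan_wedge_left:
  assumes "x \<in> kspan M"
  shows "wedge w x \<in> kspan ((\<lambda>m. wedge w m) ` M)"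
  using assms
  by (induction x rule: kspan.induct)
     (auto simp: wedge_kzero_right wedge_kadd_right wedge_ksmult_right intro: kspan.intros)

lemma kspan_wedge:
  assumes "x \<in> kspan A" "y \<in> kspan B"
  shows "wedge x y \<in> kspan {wedge a b | a b. a \<in> A \<and> b \<in> B}"
  using assms(1)
proof (induction x rule: kspan.induct)
  case (base a)
  then have "(\<lambda>m. wedge a m) ` B \<subseteq> kspan {wedge a b | a b. a \<in> A \<and> b \<in> B}"
    by (auto intro: kspan.base)
  then show ?case using kspan_subset kspan_wedge_left[OF assms(2)] by blast
qed (simp_all add: wedge_kzero_left wedge_kadd_left wedge_ksmult_left kspan.intros)

lemma subalg_mono:
  assumes "G \<subseteq> H" "x \<in> subalg G"
  shows "x \<in> subalg H"
  using assms(2) by induction (use assms(1) in \<open>auto intro: subalg.intros\<close>)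

lemma kzero_in_subalg: "kzero \<in> subalg G"
proof -
  have "ksmult 0 kone \<in> subalg G" by (intro subalg.smult subalg.one)
  then show ?thesis by (simp add: ksmult_def kzero_def)
qed

lemma ksum_in_subalg:
  assumes "finite A" "\<And>j. j \<in> A \<Longrightarrow> g j \<in> subalg G"
  shows "(\<lambda>S. \<Sum>j\<in>A. c j * g j S) \<in> subalg G"
  using assms
proof (induction A rule: finite_induct)
  case empty
  then show ?case using kzero_in_subalg by (simp add: kzero_def)
next
  case (insert j A)
  then have "kadd (ksmult (c j) (g j)) (\<lambda>S. \<Sum>j\<in>A. c j * g j S) \<in> subalg G"
    by (simp add: subalg.add subalg.smult)
  then show ?case using insert by (simp add: kadd_def ksmult_def)
qed

lemma subalg_subset_kspan_wedge_lists:
  assumes "\<And>g. g \<in> G \<Longrightarrow> kfinite g" "x \<in> subalg G"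
  shows "x \<in> kspan (wedge_list ` lists G)"
  using assms(2)
proof (induction x rule: subalg.induct)
  case one
  have "kone \<in> wedge_list ` lists G" by (rule image_eqI[of _ _ "[]"]) auto
  then show ?case by (rule kspan.base)
next
  case (gen x)
  then have "x \<in> wedge_list ` lists G"
    using assms(1) by (intro image_eqI[of _ _ "[x]"]) (simp_all add: wedge_kone_right)
  then show ?case by (rule kspan.base)
next
  case (mult x y)
  have "{wedge a b | a b. a \<in> wedge_list ` lists G \<and> b \<in> wedge_list ` lists G} \<subseteq> kspan (wedge_list ` lists G)"
    by (auto simp flip: wedge_list_append intro!: kspan.base image_eqI[OF refl])
  then show ?case using kspan_wedge[OF mult.IH] kspan_subset by blast
qed (auto intro: kspan.intros)

lemma wedge_list_kadd_in_kspan: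
  assumes A: "\<And>x. x \<in> A \<Longrightarrow> homog 1 x" and B: "\<And>y. y \<in> B \<Longrightarrow> homog 1 y"
    and ws: "\<And>w. w \<in> set ws \<Longrightarrow> \<exists>p\<in>A. \<exists>q\<in>B. w = kadd p q"
  shows "wedge_list ws \<in> kspan {wedge (wedge_list xs) (wedge_list ys) | xs ys.
           xs \<in> lists A \<and> ys \<in> lists B \<and> length xs + length ys = length ws}"
  using ws
proof (induction ws)
  case Nil
  have "wedge_list [] = wedge (wedge_list []) (wedge_list [])"
    by (simp add: wedge_kone_left kfinite_kone)
  then show ?case by (intro kspan.base) force
next
  case (Cons w ws)
  let ?M = "\<lambda>n. {wedge (wedge_list xs) (wedge_list ys) | xs ys.
                  xs \<in> lists A \<and> ys \<in> lists B \<and> length xs + length ys = n}"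
  obtain p q where w: "w = kadd p q" "p \<in> A" "q \<in> B" using Cons.prems[of w] by auto
  have IH: "wedge_list ws \<in> kspan (?M (length ws))"
    using Cons.IH Cons.prems by simp
  have "wedge w m \<in> kspan (?M (length (w # ws)))" if "m \<in> ?M (length ws)" for m
  proof -
    obtain xs ys where xy: "xs \<in> lists A" "ys \<in> lists B" "length xs + length ys = length ws"
      and m: "m = wedge (wedge_list xs) (wedge_list ys)"
      using \<open>m \<in> ?M (length ws)\<close> by blast
    have "wedge q (wedge_list xs) = ksmult ((- 1) ^ length xs) (wedge (wedge_list xs) q)"
      using wedge_list_commute_degree_one[of q xs] xy(1) A B[OF w(3)]
      by (auto simp: ksmult_ksmult ksmult_one power_mult_distrib[symmetric])
    then have split: "wedge w m = kadd (wedge (wedge_list (p # xs)) (wedge_list ys))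
        (ksmult ((- 1) ^ length xs) (wedge (wedge_list xs) (wedge_list (q # ys))))"
      unfolding m w(1) by (simp add: wedge_kadd_left wedge_assoc[symmetric] wedge_ksmult_left)
    have "wedge (wedge_list (p # xs)) (wedge_list ys) \<in> ?M (length (w # ws))"
      using xy w by (intro CollectI exI[of _ "p # xs"] exI[of _ ys]) auto
    moreover have "wedge (wedge_list xs) (wedge_list (q # ys)) \<in> ?M (length (w # ws))"
      using xy w by (intro CollectI exI[of _ xs] exI[of _ "q # ys"]) auto
    ultimately show ?thesis
      unfolding split by (intro kspan.add kspan.smult kspan.base)
  qed
  then have "wedge w ` ?M (length ws) \<subseteq> kspan (?M (length (w # ws)))"
    by blast
  from kspan_subset[OF this kspan_wedge_left[OF IH]] show ?case by simp
qed

section \<open>Koszul cycles and the Fitting ideal\<close>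

lemma degree_one_kcycle_iff:
  assumes "kelem r q" "homog 1 q"
  shows "q \<in> kcycles r f \<longleftrightarrow> (\<Sum>i<r. q {i} * f i) = 0"
proof -
  have nonempty: "kdiff r f q T = 0" if "T \<noteq> {}" for T
  proof -
    have "q (insert i T) = 0" if "i \<notin> T" for i
    proof (rule ccontr)
      assume "q (insert i T) \<noteq> 0"
      then have "card (insert i T) = 1" using assms(2) unfolding homog_def by blast
      then obtain z where "insert i T = {z}" by (rule card_1_singletonE)
      then show False using \<open>T \<noteq> {}\<close> \<open>i \<notin> T\<close> by blast
    qed
    then show ?thesis unfolding kdiff_def by (intro sum.neutral) auto
  qed
  have empty: "kdiff r f q {} = (\<Sum>i<r. q {i} * f i)"
    unfolding kdiff_def by (simp add: mult.commute)
  have "kdiff r f q = (\<lambda>_. 0) \<longleftrightarrow> kdiff r f q {} = 0"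
    using nonempty by (metis (mono_tags))
  then show ?thesis
    using assms(1) empty unfolding kcycles_def by simp
qed

lemma zeta_singleton: "i < r \<Longrightarrow> zeta r c j {i} = c i j"
  unfolding zeta_def by (rule sum_ebasis_singleton)

lemma homog_zeta: "homog 1 (zeta r c j)"
  unfolding zeta_def by (rule homog_ksum) (rule homog_ebasis)

lemma kelem_zeta: "kelem r (zeta r c j)"
  unfolding zeta_def by (rule kelem_ksum) (simp add: kelem_ebasis)

lemma subspace_Fitt0: "ideal.subspace (Fitt0 r f J)"
  unfolding Fitt0_def ideal_gen_eq_span by simp

lemma detn_relations_in_Fitt0:
  assumes "\<And>k. k < r \<Longrightarrow> (\<Sum>i<r. V k i * f i) \<in> J"
  shows "detn r (\<lambda>i k. V k i) \<in> Fitt0 r f J"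
  unfolding Fitt0_def ideal_gen_eq_span using assms by (intro ideal.span_base) blast

lemma top_coeff_subalg_in_Fitt0:
  assumes G: "\<And>u. u \<in> G \<Longrightarrow> kelem r u \<and> homog 1 u \<and> (\<Sum>i<r. u {i} * f i) \<in> J"
    and "x \<in> subalg G"
  shows "x {..<r} \<in> Fitt0 r f J"
proof -
  have x: "x \<in> kspan (wedge_list ` lists G)"
    using G assms(2) by (intro subalg_subset_kspan_wedge_lists) (auto intro: kelem_imp_kfinite)
  have "wedge_list us {..<r} \<in> Fitt0 r f J" if "us \<in> lists G" for us
  proof (cases "length us = r")
    case True
    then have "wedge_list us {..<r} = detn r (\<lambda>i k. (us ! k) {i})"
      using that G by (intro wedge_list_top_coeff) auto
    moreover have "(\<Sum>i<r. (us ! k) {i} * f i) \<in> J" if "k < r" for k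
      using G \<open>us \<in> lists G\<close> \<open>length us = r\<close> that by (simp add: in_lists_conv_set)
    ultimately show ?thesis using detn_relations_in_Fitt0[of r "\<lambda>k i. (us ! k) {i}"] by simp
  next
    case False
    have "homog (length us) (wedge_list us)"
      using that G by (intro homog_wedge_list) auto
    then have "wedge_list us {..<r} = 0"
      using False unfolding homog_def by (metis card_lessThan)
    then show ?thesis using ideal.subspace_0[OF subspace_Fitt0] by simp
  qed
  then show ?thesis
    by (intro kspan_coeff_in_ideal[OF x _ subspace_Fitt0]) blast
qed

lemma prod_part_subset_Fitt0:
  assumes a: "\<forall>j<s. a j = (\<Sum>i<r. c i j * f i)"
  shows "prod_part r (Gamma r c s) (subalg (kcycles1 r f)) \<subseteq> Fitt0 r f (ideal_gen (a ` {..<s}))"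
proof -
  let ?G = "zeta r c ` {..<s} \<union> kcycles1 r f"
  have G: "kelem r u \<and> homog 1 u \<and> (\<Sum>i<r. u {i} * f i) \<in> ideal_gen (a ` {..<s})"
    if "u \<in> ?G" for u
    using that
  proof
    assume "u \<in> zeta r c ` {..<s}"
    then obtain j where j: "j < s" "u = zeta r c j" by blast
    then have "(\<Sum>i<r. u {i} * f i) = a j"
      using a by (simp add: zeta_singleton)
    then show ?thesis
      using j homog_zeta[of r c j] kelem_zeta[of r c j] by (simp add: ideal_gen_eq_span ideal.span_base)
  next
    assume "u \<in> kcycles1 r f"
    then show ?thesis
      unfolding kcycles1_def kcycles_def
      using degree_one_kcycle_iff[of r u f]
      by (auto simp: kcycles_def ideal_gen_eq_span ideal.span_zero)
  qed
  have "wedge x y \<in> subalg ?G" if "x \<in> Gamma r c s" "y \<in> subalg (kcycles1 r f)" for x y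
    using that unfolding Gamma_def by (blast intro: subalg.mult subalg_mono)
  then have "z \<in> Fitt0 r f (ideal_gen (a ` {..<s}))"
    if "z \<in> {wedge x y {..<r} | x y j. j \<le> r \<and> x \<in> Gamma r c s \<and> homog j x \<and>
      y \<in> subalg (kcycles1 r f) \<and> homog (r - j) y}" for z
    using that top_coeff_subalg_in_Fitt0[OF G] by blast
  then show ?thesis
    unfolding prod_part_def by (intro ideal_gen_minimal subspace_Fitt0 subsetI)
qed

lemma relation_vector_decomposition:
  assumes a: "\<forall>j<s. a j = (\<Sum>i<r. c i j * f i)"
    and v: "(\<Sum>i<r. v i * f i) \<in> ideal_gen (a ` {..<s})"
  obtains p q where "p \<in> Gamma r c s" "homog 1 p" "q \<in> kcycles1 r f"
    "(\<lambda>S. \<Sum>i<r. v i * ebasis i S) = kadd p q"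
proof -
  obtain b where b: "(\<Sum>i<r. v i * f i) = (\<Sum>j<s. b j * a j)"
    using v by (rule ideal_gen_finite_lincomb)
  define p where "p = (\<lambda>S. \<Sum>j<s. b j * zeta r c j S)"
  define q where "q = (\<lambda>S. (\<Sum>i<r. v i * ebasis i S) - p S)"
  have p_Gamma: "p \<in> Gamma r c s"
    unfolding p_def Gamma_def by (rule ksum_in_subalg) (auto intro: subalg.gen)
  have p: "homog 1 p" "kelem r p"
    unfolding p_def by (intro homog_ksum homog_zeta kelem_ksum kelem_zeta)+
  have "homog 1 (\<lambda>S. \<Sum>i<r. v i * ebasis i S)" "kelem r (\<lambda>S. \<Sum>i<r. v i * ebasis i S)"
    by (auto intro!: homog_ksum homog_ebasis kelem_ksum kelem_ebasis)
  then have q: "homog 1 q" "kelem r q"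
    unfolding q_def using p by (simp_all add: homog_diff kelem_diff)
  have "(\<Sum>i<r. q {i} * f i) = 0"
  proof -
    have "(\<Sum>i<r. q {i} * f i) = (\<Sum>i<r. v i * f i) - (\<Sum>i<r. \<Sum>j<s. b j * c i j * f i)"
      unfolding q_def p_def
      by (simp add: sum_ebasis_singleton zeta_singleton left_diff_distrib sum_subtractf sum_distrib_right)
    also have "(\<Sum>i<r. \<Sum>j<s. b j * c i j * f i) = (\<Sum>j<s. b j * a j)"
      using a by (simp add: sum.swap[of _ "{..<r}"] sum_distrib_left mult.assoc)
    finally show ?thesis using b by simp
  qed
  then have "q \<in> kcycles1 r f"
    unfolding kcycles1_def using degree_one_kcycle_iff[OF q(2,1)] q by simp
  moreover have "(\<lambda>S. \<Sum>i<r. v i * ebasis i S) = kadd p q"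
    unfolding q_def kadd_def by simp
  ultimately show thesis using that p_Gamma p by blast
qed

lemma subspace_prod_part: "ideal.subspace (prod_part r A B)"
  unfolding prod_part_def ideal_gen_eq_span by simp

lemma wedge_lists_top_coeff_in_prod_part:
  assumes "xs \<in> lists {x \<in> subalg G. homog 1 x}" "ys \<in> lists {y \<in> subalg H. homog 1 y}"
    and "length xs + length ys = r"
  shows "wedge (wedge_list xs) (wedge_list ys) {..<r} \<in> prod_part r (subalg G) (subalg H)"
proof -
  have "homog (length xs) (wedge_list xs)" "homog (length ys) (wedge_list ys)"
    using assms(1,2) by (auto intro!: homog_wedge_list)
  then have "homog (length xs) (wedge_list xs)" "homog (r - length xs) (wedge_list ys)"
    using assms(3) by auto
  moreover have "wedge_list xs \<in> subalg G" "wedge_list ys \<in> subalg H"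
    using assms(1,2) by (auto intro!: wedge_list_in_subalg)
  ultimately have "wedge (wedge_list xs) (wedge_list ys) {..<r} \<in> {wedge x y {..<r} | x y j.
      j \<le> r \<and> x \<in> subalg G \<and> homog j x \<and> y \<in> subalg H \<and> homog (r - j) y}"
    using assms(3)
    by (intro CollectI exI[of _ "wedge_list xs"] exI[of _ "wedge_list ys"] exI[of _ "length xs"]) auto
  then show ?thesis
    unfolding prod_part_def ideal_gen_eq_span by (rule ideal.span_base)
qed

lemma detn_relations_in_prod_part:
  assumes a: "\<forall>j<s. a j = (\<Sum>i<r. c i j * f i)"
    and rel: "\<And>k. k < r \<Longrightarrow> (\<Sum>i<r. V k i * f i) \<in> ideal_gen (a ` {..<s})"
  shows "detn r (\<lambda>i k. V k i) \<in> prod_part r (Gamma r c s) (subalg (kcycles1 r f))"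
proof -
  let ?A = "{x \<in> Gamma r c s. homog 1 x}"
  let ?B = "{y \<in> subalg (kcycles1 r f). homog 1 y}"
  let ?us = "map (\<lambda>k S. \<Sum>i<r. V k i * ebasis i S) [0..<r]"
  have "\<exists>p\<in>?A. \<exists>q\<in>?B. w = kadd p q" if row: "w \<in> set ?us" for w
  proof -
    obtain k where "k < r" and w: "w = (\<lambda>S. \<Sum>i<r. V k i * ebasis i S)"
      using row by auto
    obtain p q where "p \<in> Gamma r c s" "homog 1 p" "q \<in> kcycles1 r f" "w = kadd p q"
      unfolding w using relation_vector_decomposition[OF a rel[OF \<open>k < r\<close>]] by blast
    then show ?thesis by (auto simp: kcycles1_def intro: subalg.gen)
  qed
  then have "wedge_list ?us \<in> kspan {wedge (wedge_list xs) (wedge_list ys) | xs ys.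
      xs \<in> lists ?A \<and> ys \<in> lists ?B \<and> length xs + length ys = length ?us}"
    by (intro wedge_list_kadd_in_kspan) auto
  moreover have "\<And>m. m \<in> {wedge (wedge_list xs) (wedge_list ys) | xs ys.
      xs \<in> lists ?A \<and> ys \<in> lists ?B \<and> length xs + length ys = length ?us} \<Longrightarrow>
      m {..<r} \<in> prod_part r (Gamma r c s) (subalg (kcycles1 r f))"
    unfolding Gamma_def using wedge_lists_top_coeff_in_prod_part by fastforce
  ultimately have "wedge_list ?us {..<r} \<in> prod_part r (Gamma r c s) (subalg (kcycles1 r f))"
    by (rule kspan_coeff_in_ideal[OF _ _ subspace_prod_part])
  then show ?thesis by (simp only: wedge_list_rows_top_coeff)
qed

lemma Fitt0_subset_prod_part:
  assumes "\<forall>j<s. a j = (\<Sum>i<r. c i j * f i)"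
  shows "Fitt0 r f (ideal_gen (a ` {..<s})) \<subseteq> prod_part r (Gamma r c s) (subalg (kcycles1 r f))"
  unfolding Fitt0_def
  using detn_relations_in_prod_part[OF assms]
  by (intro ideal_gen_minimal subspace_prod_part subsetI) blast

theorem proposition4p18:
  fixes f a :: "nat \<Rightarrow> 'a::comm_ring_1" and c :: "nat \<Rightarrow> nat \<Rightarrow> 'a" and r s :: nat
  assumes "\<forall>j<s. a j = (\<Sum>i<r. c i j * f i)"
  shows "prod_part r (Gamma r c s) (subalg (kcycles1 r f)) = Fitt0 r f (ideal_gen (a ` {..<s}))
     \<and> (kcycles r f = subalg (kcycles1 r f) \<longrightarrow> Kitt r f c s = Fitt0 r f (ideal_gen (a ` {..<s})))"
proof -
  have "prod_part r (Gamma r c s) (subalg (kcycles1 r f)) = Fitt0 r f (ideal_gen (a ` {..<s}))"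
    using prod_part_subset_Fitt0[OF assms] Fitt0_subset_prod_part[OF assms] by (rule subset_antisym)
  then show ?thesis
    unfolding Kitt_def by simp
qed

end
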